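(* Let $\beta\in(0,2]$ and, on the open subset $U\subset H^3$ where the geodesic polar coordinates $(r,\theta,\phi)$ with $r>0$, $\theta\in(0,\pi)$ are valid (so $g_{H^3}=\mathrm{d}r^2+\sinh^2 r(\mathrm{d}\theta^2+\sin^2\theta\,\mathrm{d}\phi^2)$), define $$\mathcal{A}=\frac{\mathbf{i}}{2}\cos\theta\,\mathrm{d}\phi+\frac{2(\beta-1)\,\mathrm{e}^{2r}\sinh r}{\mathrm{e}^{4r}-(\beta-1)^2}\left(\mathbf{j}\sin\theta\,\mathrm{d}\phi-\mathbf{k}\,\mathrm{d}\theta\right),$$ $$\Phi=\frac{\mathbf{i}}{4}(1-\coth r)\,\frac{(\beta-1)^2(1-3\mathrm{e}^{2r})-\mathrm{e}^{6r}(1-3\mathrm{e}^{-2r})}{\mathrm{e}^{4r}-(\beta-1)^2}.$$ Then $(\Phi,\mathcal{A})$ satisfies the Bogomolny equations $\mathrm{d}_{\mathcal{A}}\Phi=-\ast_{H^3}\mathcal{F}$ on $U$, where $\mathcal{F}$ is the curvature of $\mathcal{A}$. Moreover $\|\Phi\|\to\tfrac12$ as $r\to\infty$.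
   Context: $\mathfrak{su}(2)$ is identified with the imaginary quaternions spanned by $\mathbf{i},\mathbf{j},\mathbf{k}$, with inner product $\langle X,Y\rangle=-\tfrac12\mathrm{Tr}(XY)$ (so $\|\mathbf{i}\|=1$). $\mathrm{d}_{\mathcal{A}}\Phi=\mathrm{d}\Phi+[\mathcal{A},\Phi]$ with $[X,Y]=XY-YX$, and $\mathcal{F}=\mathrm{d}\mathcal{A}+\mathcal{A}\wedge\mathcal{A}$. $\ast_{H^3}$ is the Hodge star of $g_{H^3}$ with orientation given by $\sinh^2 r\sin\theta\,\mathrm{d}r\wedge\mathrm{d}\theta\wedge\mathrm{d}\phi$. *)

theory Defs
  imports "HOL-Analysis.Analysis"
begin

text \<open>The Lie algebra su(2) (imaginary quaternions a i + b j + c k) is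
represented by its coefficient vectors in real^3: i, j, k are the standard basis vectors.
Then the commutator [X,Y] = XY - YX of imaginary quaternions is 2 (X cross Y), and the
norm for the inner product -1/2 Tr(XY) is the Euclidean norm of the coefficient vector.\<close>

type_synonym su2 = "real^3"

definition qi :: su2 where "qi = axis 1 1"
definition qj :: su2 where "qj = axis 2 1"
definition qk :: su2 where "qk = axis 3 1"

definition lie_bracket :: "su2 \<Rightarrow> su2 \<Rightarrow> su2" where
  "lie_bracket X Y = 2 *\<^sub>R cross3 X Y"

text \<open>Coordinates: a point p :: real^3 has coordinates (p$1, p$2, p$3) = (r, theta, phi).
An su(2)-valued function is  real^3 \<Rightarrow> su2; an su(2)-valued 1-form is given by its
components  A p a  (coefficient of dx_a); a 2-form by its components  F p a b
(antisymmetric, F = 1/2 sum F_ab dx_a wedge dx_b).\<close>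

definition pd :: "3 \<Rightarrow> (real^3 \<Rightarrow> 'b::real_normed_vector) \<Rightarrow> real^3 \<Rightarrow> 'b" where
  "pd i f p = vector_derivative (\<lambda>t. f (p + t *\<^sub>R axis i 1)) (at 0)"

definition cov_deriv :: "(real^3 \<Rightarrow> 3 \<Rightarrow> su2) \<Rightarrow> (real^3 \<Rightarrow> su2) \<Rightarrow> real^3 \<Rightarrow> 3 \<Rightarrow> su2" where
  "cov_deriv A Phi p a = pd a Phi p + lie_bracket (A p a) (Phi p)"

definition curvature :: "(real^3 \<Rightarrow> 3 \<Rightarrow> su2) \<Rightarrow> real^3 \<Rightarrow> 3 \<Rightarrow> 3 \<Rightarrow> su2" where
  "curvature A p a b = pd a (\<lambda>q. A q b) p - pd b (\<lambda>q. A q a) p + lie_bracket (A p a) (A p b)"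

definition levi_civita :: "3 \<Rightarrow> 3 \<Rightarrow> 3 \<Rightarrow> real" where
  "levi_civita a b c =
     (if (a, b, c) \<in> {(1, 2, 3), (2, 3, 1), (3, 1, 2)} then 1
      else if (a, b, c) \<in> {(1, 3, 2), (3, 2, 1), (2, 1, 3)} then -1 else 0)"

text \<open>Hodge star of a 2-form for a Riemannian metric g (matrix of components g_ab in the
coordinates), with orientation dx_1 wedge dx_2 wedge dx_3:
 (*F)_a = 1/2 sqrt(det g) sum_{b,c} eps_abc F^bc,  F^bc = g^bb' g^cc' F_b'c'.\<close>
definition hodge2 :: "(real^3 \<Rightarrow> real^3^3) \<Rightarrow> (real^3 \<Rightarrow> 3 \<Rightarrow> 3 \<Rightarrow> su2) \<Rightarrow> real^3 \<Rightarrow> 3 \<Rightarrow> su2" where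
  "hodge2 g F p a =
     (let gi = matrix_inv (g p) in
      (sqrt (det (g p)) / 2) *\<^sub>R
        (\<Sum>b\<in>UNIV. \<Sum>c\<in>UNIV. levi_civita a b c *\<^sub>R
          (\<Sum>b'\<in>UNIV. \<Sum>c'\<in>UNIV. (gi $ b $ b' * gi $ c $ c') *\<^sub>R F p b' c')))"

definition g_H3 :: "real^3 \<Rightarrow> real^3^3" where
  "g_H3 p = (\<chi> a b. if a = b then
       (if a = 1 then 1 else if a = 2 then (sinh (p$1))\<^sup>2
        else (sinh (p$1))\<^sup>2 * (sin (p$2))\<^sup>2) else 0)"

definition U_polar :: "(real^3) set" where
  "U_polar = {p. 0 < p$1 \<and> 0 < p$2 \<and> p$2 < pi}"

end

theory Submission
  imports Defs "HOL-Real_Asymp.Real_Asymp"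
begin

text \<open>For the spherically symmetric ansatz
  \<open>A = i/2 cos \<theta> d\<phi> + f(r) (j sin \<theta> d\<phi> - k d\<theta>)\<close>, \<open>\<Phi> = h(r) i\<close>,
the three components of the Bogomolny equation \<open>d\<^sub>A \<Phi> = - * F\<close> reduce to the ODE system
\<open>f' = -2 f h\<close>, \<open>h' = (1/2 - 2 f\<^sup>2) / sinh\<^sup>2 r\<close>.
In the variable \<open>x = e\<^sup>r\<close>, with \<open>m = \<beta> - 1\<close>, the given profiles are the rational functions
\<open>f = m x (x\<^sup>2 - 1) / (x\<^sup>4 - m\<^sup>2)\<close> and
\<open>h = (x\<^sup>6 - 3x\<^sup>4 + 3m\<^sup>2x\<^sup>2 - m\<^sup>2) / (2 (x\<^sup>2 - 1)(x\<^sup>4 - m\<^sup>2))\<close>,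
so the ODEs become polynomial identities, and \<open>h \<rightarrow> 1/2\<close> as \<open>x \<rightarrow> \<infinity>\<close>.
Since \<open>\<beta> \<in> (0,2]\<close> gives \<open>m\<^sup>2 \<le> 1\<close>, the denominators do not vanish for \<open>r > 0\<close>.\<close>

lemma pd_eqI:
  assumes "\<And>t. g (p + t *\<^sub>R axis i 1) = G (p$i + t)"
    and "(G has_vector_derivative G') (at (p$i))"
  shows "pd i g p = G'"
proof -
  have "((\<lambda>t. p$i + t) has_vector_derivative 1) (at 0)"
    by (auto intro!: derivative_eq_intros simp: has_real_derivative_iff_has_vector_derivative[symmetric])
  then have "((G \<circ> (\<lambda>t. p$i + t)) has_vector_derivative G') (at 0)"
    using vector_diff_chain_at assms(2) by fastforce
  then show ?thesis
    unfolding pd_def assms(1) by (simp add: o_def vector_derivative_at)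
qed

lemma pd_const:
  assumes "\<And>t. g (p + t *\<^sub>R axis i 1) = g p"
  shows "pd i g p = 0"
  by (rule pd_eqI[where G = "\<lambda>_. g p"]) (use assms in auto)

lemma diagonal_matrix_mult:
  "(\<chi> i j. if i = j then a i else 0) ** (\<chi> i j. if i = j then b i else 0)
      = ((\<chi> i j. if i = j then a i * b i else 0) :: real^'n::finite^'n)"
proof -
  have "(\<Sum>k\<in>UNIV. (if i = k then a i else 0) * (if k = j then b k else 0))
      = (if i = j then a i * b i else (0::real))" for i j :: 'n
    by (simp add: if_distrib if_distribR sum.If_cases)
  then show ?thesis
    by (simp add: vec_eq_iff matrix_matrix_mult_def)
qed

lemma matrix_inv_diagonal:
  fixes d :: "'n::finite \<Rightarrow> real"
  assumes "\<And>i. d i \<noteq> 0"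
  shows "matrix_inv (\<chi> i j. if i = j then d i else 0) = (\<chi> i j. if i = j then 1 / d i else 0)"
proof -
  let ?A = "(\<chi> i j. if i = j then d i else 0) :: real^'n^'n"
  let ?B = "(\<chi> i j. if i = j then 1 / d i else 0) :: real^'n^'n"
  have AB: "?A ** ?B = mat 1" and BA: "?B ** ?A = mat 1"
    using assms by (simp_all add: diagonal_matrix_mult mat_def vec_eq_iff)
  show ?thesis
    unfolding matrix_inv_def
  proof (rule some_equality)
    fix C assume "?A ** C = mat 1 \<and> C ** ?A = mat 1"
    then have CA: "C ** ?A = mat 1" by simp
    have "C = C ** (?A ** ?B)" by (simp add: AB matrix_mul_rid)
    also have "\<dots> = (C ** ?A) ** ?B" by (rule matrix_mul_assoc)
    finally show "C = ?B" by (simp add: CA matrix_mul_lid)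
  qed (use AB BA in simp)
qed

lemma prod_UNIV_3: "prod f (UNIV::3 set) = f 1 * f 2 * f 3"
  unfolding UNIV_3 by (simp add: ac_simps)

lemma hodge2_diagonal:
  assumes g: "g p = (\<chi> a b. if a = b then d a else 0)" and pos: "\<And>a. 0 < d a"
  shows "hodge2 g F p a = (sqrt (d 1 * d 2 * d 3) / 2) *\<^sub>R
           (\<Sum>b\<in>UNIV. \<Sum>c\<in>UNIV. (levi_civita a b c / (d b * d c)) *\<^sub>R F p b c)"
proof -
  have inv: "matrix_inv (g p) = (\<chi> a b. if a = b then 1 / d a else 0)"
    unfolding g using pos by (intro matrix_inv_diagonal) (simp add: less_imp_neq[symmetric])
  have det: "det (g p) = d 1 * d 2 * d 3"
  proof -
    have "det (g p) = prod d UNIV"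
      unfolding g by (subst det_diagonal) simp_all
    then show ?thesis
      by (simp add: prod_UNIV_3)
  qed
  have raise: "(\<Sum>b'\<in>UNIV. \<Sum>c'\<in>UNIV. ((if b = b' then 1 / d b else 0) * (if c = c' then 1 / d c else 0)) *\<^sub>R F p b' c')
      = (1 / (d b * d c)) *\<^sub>R F p b c" for b c
    by (simp add: if_distrib if_distribR sum.If_cases)
  show ?thesis
    unfolding hodge2_def Let_def inv det vec_lambda_beta raise
    by (simp add: scaleR_sum_right)
qed

lemma hodge2_g_H3:
  assumes "p \<in> U_polar"
  shows "hodge2 g_H3 F p 1 = (1 / (2 * (sinh (p$1))\<^sup>2 * sin (p$2))) *\<^sub>R (F p 2 3 - F p 3 2)"
    and "hodge2 g_H3 F p 2 = (1 / (2 * sin (p$2))) *\<^sub>R (F p 3 1 - F p 1 3)"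
    and "hodge2 g_H3 F p 3 = (sin (p$2) / 2) *\<^sub>R (F p 1 2 - F p 2 1)"
proof -
  define S s where "S = sinh (p$1)" and "s = sin (p$2)"
  have "S > 0" "s > 0"
    using assms by (simp_all add: S_def s_def U_polar_def sin_gt_zero)
  define d :: "3 \<Rightarrow> real" where "d a = (if a = 1 then 1 else if a = 2 then S\<^sup>2 else S\<^sup>2 * s\<^sup>2)" for a
  have g: "g_H3 p = (\<chi> a b. if a = b then d a else 0)"
    by (simp add: g_H3_def d_def S_def s_def vec_eq_iff)
  have pos: "0 < d a" for a
    using \<open>S > 0\<close> \<open>s > 0\<close> by (simp add: d_def)
  have vol: "sqrt (d 1 * d 2 * d 3) = S\<^sup>2 * s"
    using \<open>S > 0\<close> \<open>s > 0\<close> by (simp add: d_def real_sqrt_mult power2_eq_square)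
  have d: "d 1 = 1" "d 2 = S\<^sup>2" "d 3 = S\<^sup>2 * s\<^sup>2"
    by (simp_all add: d_def)
  note star = hodge2_diagonal[where g = g_H3 and p = p and d = d and F = F, OF g pos,
      unfolded vol, unfolded sum_3 levi_civita_def d]
  show "hodge2 g_H3 F p 1 = (1 / (2 * (sinh (p$1))\<^sup>2 * sin (p$2))) *\<^sub>R (F p 2 3 - F p 3 2)"
    "hodge2 g_H3 F p 2 = (1 / (2 * sin (p$2))) *\<^sub>R (F p 3 1 - F p 1 3)"
    "hodge2 g_H3 F p 3 = (sin (p$2) / 2) *\<^sub>R (F p 1 2 - F p 2 1)"
    using \<open>S > 0\<close> \<open>s > 0\<close> unfolding star S_def[symmetric] s_def[symmetric]
    by (simp_all add: scaleR_diff_right field_simps power2_eq_square)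
qed

lemma cross3_quaternion_units:
  "cross3 qi qj = qk" "cross3 qj qk = qi" "cross3 qk qi = qj"
  "cross3 qj qi = - qk" "cross3 qk qj = - qi" "cross3 qi qk = - qj"
  unfolding qi_def qj_def qk_def by (simp_all add: cross_basis)

definition ansatz_connection :: "(real \<Rightarrow> real) \<Rightarrow> real^3 \<Rightarrow> 3 \<Rightarrow> su2" where
  "ansatz_connection f p a = (if a = 1 then 0
     else if a = 2 then - (f (p$1)) *\<^sub>R qk
     else (cos (p$2) / 2) *\<^sub>R qi + (f (p$1) * sin (p$2)) *\<^sub>R qj)"

definition ansatz_higgs :: "(real \<Rightarrow> real) \<Rightarrow> real^3 \<Rightarrow> su2" where
  "ansatz_higgs h p = h (p$1) *\<^sub>R qi"

lemma bogomolny_ansatz: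
  assumes p: "p \<in> U_polar"
    and f': "(f has_real_derivative - 2 * f (p$1) * h (p$1)) (at (p$1))"
    and h': "(h has_real_derivative (1/2 - 2 * (f (p$1))\<^sup>2) / (sinh (p$1))\<^sup>2) (at (p$1))"
  shows "cov_deriv (ansatz_connection f) (ansatz_higgs h) p a
       = - hodge2 g_H3 (curvature (ansatz_connection f)) p a"
proof -
  define r \<theta> where "r = p$1" and "\<theta> = p$2"
  have "sinh r > 0" "sin \<theta> > 0"
    using p by (simp_all add: U_polar_def r_def \<theta>_def sin_gt_zero)
  have higgs_1: "pd 1 (ansatz_higgs h) p = ((1/2 - 2 * (f r)\<^sup>2) / (sinh r)\<^sup>2) *\<^sub>R qi"
    by (rule pd_eqI[where G = "\<lambda>s. h s *\<^sub>R qi"])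
       (auto simp: ansatz_higgs_def axis_def r_def intro!: derivative_eq_intros h')
  have higgs_23: "pd i (ansatz_higgs h) p = 0" if "i \<noteq> 1" for i
    by (rule pd_const) (simp add: ansatz_higgs_def axis_def that)
  have conn_1: "pd i (\<lambda>q. ansatz_connection f q 1) p = 0" for i
    by (rule pd_const) (simp add: ansatz_connection_def)
  have conn_2_1: "pd 1 (\<lambda>q. ansatz_connection f q 2) p = (2 * f r * h r) *\<^sub>R qk"
    by (rule pd_eqI[where G = "\<lambda>s. - (f s *\<^sub>R qk)"])
       (auto simp: ansatz_connection_def axis_def r_def intro!: derivative_eq_intros f')
  have conn_2_i: "pd i (\<lambda>q. ansatz_connection f q 2) p = 0" if "i \<noteq> 1" for i
    by (rule pd_const) (simp add: ansatz_connection_def axis_def that)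
  have conn_3_1: "pd 1 (\<lambda>q. ansatz_connection f q 3) p = (- 2 * f r * h r * sin \<theta>) *\<^sub>R qj"
    by (rule pd_eqI[where G = "\<lambda>s. (cos \<theta> / 2) *\<^sub>R qi + (f s * sin \<theta>) *\<^sub>R qj"])
       (auto simp: ansatz_connection_def axis_def r_def \<theta>_def
         intro!: derivative_eq_intros f')
  have conn_3_2: "pd 2 (\<lambda>q. ansatz_connection f q 3) p = (- sin \<theta> / 2) *\<^sub>R qi + (f r * cos \<theta>) *\<^sub>R qj"
    by (rule pd_eqI[where G = "\<lambda>s. (cos s / 2) *\<^sub>R qi + (f r * sin s) *\<^sub>R qj"])
       (auto simp: ansatz_connection_def axis_def r_def \<theta>_def intro!: derivative_eq_intros)
  have conn_3_3: "pd 3 (\<lambda>q. ansatz_connection f q 3) p = 0"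
    by (rule pd_const) (simp add: ansatz_connection_def axis_def)
  have components: "ansatz_connection f p 1 = 0" "ansatz_connection f p 2 = - (f r *\<^sub>R qk)"
     "ansatz_connection f p 3 = (cos \<theta> / 2) *\<^sub>R qi + (f r * sin \<theta>) *\<^sub>R qj"
     "ansatz_higgs h p = h r *\<^sub>R qi"
    by (simp_all add: ansatz_connection_def ansatz_higgs_def r_def \<theta>_def)
  have star: "hodge2 g_H3 F p 1 = (1 / (2 * (sinh r)\<^sup>2 * sin \<theta>)) *\<^sub>R (F p 2 3 - F p 3 2)"
    "hodge2 g_H3 F p 2 = (1 / (2 * sin \<theta>)) *\<^sub>R (F p 3 1 - F p 1 3)"
    "hodge2 g_H3 F p 3 = (sin \<theta> / 2) *\<^sub>R (F p 1 2 - F p 2 1)" for F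
    using hodge2_g_H3[OF p] unfolding r_def \<theta>_def by auto
  note expand = cov_deriv_def curvature_def star higgs_1 higgs_23 conn_1 conn_2_1 conn_2_i
    conn_3_1 conn_3_2 conn_3_3 components lie_bracket_def cross_mult_left cross_mult_right
    cross_add_left cross_add_right cross3_quaternion_units
  consider "a = 1" | "a = 2" | "a = 3" using exhaust_3 by blast
  then show ?thesis
  proof cases
    case 1
    then show ?thesis
      using \<open>sinh r > 0\<close> \<open>sin \<theta> > 0\<close> by (simp add: expand) (simp add: vec_eq_iff field_simps power2_eq_square)
  next
    case 2
    then show ?thesis
      using \<open>sin \<theta> > 0\<close> by (simp add: expand) (simp add: vec_eq_iff algebra_simps)
  next
    case 3
    then show ?thesis
      by (simp add: expand) (simp add: vec_eq_iff algebra_simps)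
  qed
qed

definition gauge_rational :: "real \<Rightarrow> real \<Rightarrow> real" where
  "gauge_rational m x = m * x * (x\<^sup>2 - 1) / (x ^ 4 - m\<^sup>2)"

definition higgs_rational :: "real \<Rightarrow> real \<Rightarrow> real" where
  "higgs_rational m x = (x ^ 6 - 3 * x ^ 4 + 3 * m\<^sup>2 * x\<^sup>2 - m\<^sup>2) / (2 * (x\<^sup>2 - 1) * (x ^ 4 - m\<^sup>2))"

lemma gauge_rational_has_derivative:
  assumes "x \<noteq> 0" "x\<^sup>2 \<noteq> 1" "x ^ 4 \<noteq> m\<^sup>2"
  shows "(gauge_rational m has_real_derivative - 2 * gauge_rational m x * higgs_rational m x / x) (at x)"
proof -
  \<comment> \<open>The factors \<open>E\<close>, \<open>D\<close> are kept opaque so that \<open>field_simps\<close> can clear them as denominators.\<close>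
  define E D where "E = x\<^sup>2 - 1" and "D = x ^ 4 - m\<^sup>2"
  have "E \<noteq> 0" "D \<noteq> 0"
    using assms by (simp_all add: E_def D_def)
  show ?thesis
    unfolding gauge_rational_def[abs_def]
    apply (rule DERIV_cong, (rule derivative_eq_intros refl)+)
    using \<open>D \<noteq> 0\<close> apply (simp add: D_def)
     apply (rule refl)
    unfolding higgs_rational_def E_def[symmetric] D_def[symmetric]
    using \<open>x \<noteq> 0\<close> \<open>E \<noteq> 0\<close> \<open>D \<noteq> 0\<close> apply (simp add: field_simps)
    unfolding E_def D_def by algebra
qed

lemma higgs_rational_has_derivative:
  assumes "x \<noteq> 0" "x\<^sup>2 \<noteq> 1" "x ^ 4 \<noteq> m\<^sup>2"
  shows "(higgs_rational m has_real_derivative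
            (1/2 - 2 * (gauge_rational m x)\<^sup>2) * 4 * x / (x\<^sup>2 - 1)\<^sup>2) (at x)"
proof -
  define E D where "E = x\<^sup>2 - 1" and "D = x ^ 4 - m\<^sup>2"
  have "E \<noteq> 0" "D \<noteq> 0"
    using assms by (simp_all add: E_def D_def)
  show ?thesis
    unfolding higgs_rational_def[abs_def]
    apply (rule DERIV_cong, (rule derivative_eq_intros refl)+)
    using \<open>E \<noteq> 0\<close> \<open>D \<noteq> 0\<close> apply (simp add: E_def D_def)
     apply (rule refl)
    unfolding gauge_rational_def E_def[symmetric] D_def[symmetric]
    using \<open>x \<noteq> 0\<close> \<open>E \<noteq> 0\<close> \<open>D \<noteq> 0\<close> apply (simp add: field_simps)
    unfolding E_def D_def by algebra
qed

definition gauge_profile :: "real \<Rightarrow> real \<Rightarrow> real" where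
  "gauge_profile m r = 2 * m * exp (2 * r) * sinh r / (exp (4 * r) - m\<^sup>2)"

definition higgs_profile :: "real \<Rightarrow> real \<Rightarrow> real" where
  "higgs_profile m r = (1 / 4) * (1 - cosh r / sinh r) *
     ((m\<^sup>2 * (1 - 3 * exp (2 * r)) - exp (6 * r) * (1 - 3 * exp (- 2 * r))) / (exp (4 * r) - m\<^sup>2))"

lemma gauge_profile_eq_rational: "gauge_profile m r = gauge_rational m (exp r)"
proof -
  have "2 * m * exp (2 * r) * sinh r = m * exp r * ((exp r)\<^sup>2 - 1)"
    using exp_of_nat_mult[of 2 r]
    by (simp add: sinh_def exp_minus field_simps power2_eq_square)
  then show ?thesis
    using exp_of_nat_mult[of 4 r] by (simp add: gauge_profile_def gauge_rational_def)
qed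

lemma higgs_profile_eq_rational:
  assumes "r \<noteq> 0"
  shows "higgs_profile m r = higgs_rational m (exp r)"
proof -
  define x where "x = exp r"
  have "x > 0" "x\<^sup>2 \<noteq> 1"
    using assms by (simp_all add: x_def flip: exp_of_nat_mult)
  have powers: "exp (2 * r) = x\<^sup>2" "exp (4 * r) = x ^ 4" "exp (6 * r) = x ^ 6"
      "exp (- 2 * r) = 1 / x\<^sup>2"
    using exp_of_nat_mult[of 2 r] exp_of_nat_mult[of 4 r] exp_of_nat_mult[of 6 r] exp_of_nat_mult[of 2 "-r"]
    by (simp_all add: x_def exp_minus field_simps)
  have coth: "1 - cosh r / sinh r = - 2 / (x\<^sup>2 - 1)"
    using \<open>x > 0\<close> \<open>x\<^sup>2 \<noteq> 1\<close>
    by (simp add: cosh_def sinh_def exp_minus x_def[symmetric] field_simps power2_eq_square)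
  have numerator: "m\<^sup>2 * (1 - 3 * x\<^sup>2) - x ^ 6 * (1 - 3 * (1 / x\<^sup>2))
      = - (x ^ 6 - 3 * x ^ 4 + 3 * m\<^sup>2 * x\<^sup>2 - m\<^sup>2)"
    using \<open>x > 0\<close> by (simp add: field_simps)
  have "higgs_profile m r = (1 / 4) * (- 2 / (x\<^sup>2 - 1)) *
      (- (x ^ 6 - 3 * x ^ 4 + 3 * m\<^sup>2 * x\<^sup>2 - m\<^sup>2) / (x ^ 4 - m\<^sup>2))"
    unfolding higgs_profile_def powers coth numerator x_def[symmetric] ..
  also have "\<dots> = higgs_rational m x"
  proof -
    have "(1 / 4) * (- 2 / E) * (- N / D) = N / (2 * E * D)" for E N D :: real
      by (simp add: mult_ac)
    then show ?thesis
      unfolding higgs_rational_def .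
  qed
  finally show ?thesis
    by (simp add: x_def)
qed

lemma exp_powers_ne:
  assumes "0 < r" "m\<^sup>2 \<le> (1::real)"
  shows "exp r \<noteq> 0" "(exp r)\<^sup>2 \<noteq> 1" "exp r ^ 4 \<noteq> m\<^sup>2"
proof -
  have "1 < exp r" using assms by simp
  then have "1 < (exp r)\<^sup>2" "1 < exp r ^ 4"
    by (simp_all add: one_less_power)
  then show "exp r \<noteq> 0" "(exp r)\<^sup>2 \<noteq> 1" "exp r ^ 4 \<noteq> m\<^sup>2"
    using assms(2) by simp_all
qed

lemma gauge_profile_has_derivative:
  assumes "0 < r" "m\<^sup>2 \<le> 1"
  shows "(gauge_profile m has_real_derivative - 2 * gauge_profile m r * higgs_profile m r) (at r)"
proof -
  have "((\<lambda>r. gauge_rational m (exp r)) has_real_derivative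
      - 2 * gauge_rational m (exp r) * higgs_rational m (exp r) / exp r * exp r) (at r)"
    by (rule DERIV_chain2[OF gauge_rational_has_derivative[OF exp_powers_ne[OF assms]] DERIV_exp])
  moreover have "gauge_profile m = (\<lambda>r. gauge_rational m (exp r))"
    by (rule ext) (rule gauge_profile_eq_rational)
  ultimately show ?thesis
    using \<open>0 < r\<close> by (simp add: higgs_profile_eq_rational)
qed

lemma higgs_profile_has_derivative:
  assumes "0 < r" "m\<^sup>2 \<le> 1"
  shows "(higgs_profile m has_real_derivative (1/2 - 2 * (gauge_profile m r)\<^sup>2) / (sinh r)\<^sup>2) (at r)"
proof -
  define x where "x = exp r"
  have "x > 0" "x\<^sup>2 \<noteq> 1"
    using exp_powers_ne[OF assms] by (simp_all add: x_def)
  have sinh: "sinh r = (x\<^sup>2 - 1) / (2 * x)"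
    using \<open>x > 0\<close> by (simp add: sinh_def exp_minus x_def[symmetric] field_simps power2_eq_square)
  have "((\<lambda>r. higgs_rational m (exp r)) has_real_derivative
      (1/2 - 2 * (gauge_rational m x)\<^sup>2) * 4 * x / (x\<^sup>2 - 1)\<^sup>2 * x) (at r)"
    unfolding x_def
    by (rule DERIV_chain2[OF higgs_rational_has_derivative[OF exp_powers_ne[OF assms]] DERIV_exp])
  then have "(higgs_profile m has_real_derivative
      (1/2 - 2 * (gauge_rational m x)\<^sup>2) * 4 * x / (x\<^sup>2 - 1)\<^sup>2 * x) (at r)"
    by (rule has_field_derivative_transform_within_open[where S = "{0<..}"])
       (use \<open>0 < r\<close> in \<open>auto simp: higgs_profile_eq_rational\<close>)
  moreover have "(1/2 - 2 * (gauge_rational m x)\<^sup>2) * 4 * x / (x\<^sup>2 - 1)\<^sup>2 * x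
      = (1/2 - 2 * (gauge_profile m r)\<^sup>2) / (sinh r)\<^sup>2"
    unfolding sinh using \<open>x > 0\<close> \<open>x\<^sup>2 \<noteq> 1\<close>
    by (simp add: gauge_profile_eq_rational x_def[symmetric] field_simps power2_eq_square)
  ultimately show ?thesis
    by simp
qed

lemma higgs_profile_tendsto: "(higgs_profile m \<longlongrightarrow> 1/2) at_top"
proof -
  have "(higgs_rational m \<longlongrightarrow> 1/2) at_top"
    unfolding higgs_rational_def[abs_def] by real_asymp
  then have "((\<lambda>r. higgs_rational m (exp r)) \<longlongrightarrow> 1/2) at_top"
    by (rule filterlim_compose[OF _ exp_at_top])
  moreover have "\<forall>\<^sub>F r in at_top. higgs_rational m (exp r) = higgs_profile m r"
    using eventually_gt_at_top[of 0] by eventually_elim (simp add: higgs_profile_eq_rational)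
  ultimately show ?thesis
    by (rule Lim_transform_eventually)
qed

theorem mainTheorem2:
  fixes \<beta> :: real and A :: "real^3 \<Rightarrow> 3 \<Rightarrow> su2" and Phi :: "real^3 \<Rightarrow> su2"
    and f :: "real \<Rightarrow> real"
  assumes "0 < \<beta>" and "\<beta> \<le> 2"
  defines "f \<equiv> (\<lambda>r. 2 * (\<beta> - 1) * exp (2 * r) * sinh r / (exp (4 * r) - (\<beta> - 1)\<^sup>2))"
  defines "A \<equiv> (\<lambda>p a. if a = 1 then 0
               else if a = 2 then - (f (p$1)) *\<^sub>R qk
               else (cos (p$2) / 2) *\<^sub>R qi + (f (p$1) * sin (p$2)) *\<^sub>R qj)"
  defines "Phi \<equiv> (\<lambda>p. ((1 / 4) * (1 - cosh (p$1) / sinh (p$1)) *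
               (((\<beta> - 1)\<^sup>2 * (1 - 3 * exp (2 * p$1)) - exp (6 * p$1) * (1 - 3 * exp (- 2 * p$1)))
                / (exp (4 * p$1) - (\<beta> - 1)\<^sup>2))) *\<^sub>R qi)"
  shows "(\<forall>p\<in>U_polar. \<forall>a. cov_deriv A Phi p a = - hodge2 g_H3 (curvature A) p a)
    \<and> (\<forall>\<theta> \<phi>. 0 < \<theta> \<and> \<theta> < pi \<longrightarrow>
         ((\<lambda>r. norm (Phi (vector [r, \<theta>, \<phi>]))) \<longlongrightarrow> 1 / 2) at_top)"
proof -
  define m where "m = \<beta> - 1"
  have "m\<^sup>2 \<le> 1"
    using assms(1,2) by (simp add: m_def abs_square_le_1 abs_le_iff)
  have A: "A = ansatz_connection (gauge_profile m)"
    unfolding A_def f_def ansatz_connection_def gauge_profile_def m_def by (intro ext) simp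
  have Phi: "Phi = ansatz_higgs (higgs_profile m)"
    unfolding Phi_def ansatz_higgs_def higgs_profile_def m_def by (intro ext) simp
  have "cov_deriv A Phi p a = - hodge2 g_H3 (curvature A) p a" if "p \<in> U_polar" for p a
  proof -
    have "0 < p$1" using that by (simp add: U_polar_def)
    show ?thesis
      unfolding A Phi using that
      by (intro bogomolny_ansatz gauge_profile_has_derivative higgs_profile_has_derivative
          \<open>0 < p$1\<close> \<open>m\<^sup>2 \<le> 1\<close>)
  qed
  moreover have "((\<lambda>r. norm (Phi (vector [r, \<theta>, \<phi>]))) \<longlongrightarrow> 1 / 2) at_top" for \<theta> \<phi>
    using tendsto_rabs[OF higgs_profile_tendsto[of m]]
    by (simp add: Phi ansatz_higgs_def qi_def)
  ultimately show ?thesis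
    by blast
qed

end
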